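(* Let $L_5=\{-3,-2,-1,0,1\}$ with its natural linear order. Define the games $\star=\{-1\mid -3\}$, and for any game $G$: $\mathsf{M}(G)=\{1\mid G\}$, $\mathsf{P}(G)=\{G\mid -2\}$, $\mathsf{P}_\star(G)=\{G\mid \star\}$. For $n\in\mathbb{N}$ let $\mathsf{P}_n(G)=\mathsf{P}(G)$ if $n$ is odd and $\mathsf{P}_n(G)=\mathsf{P}_\star(G)$ if $n$ is even. Define $G_0=0$ (the atomic game $[0]$) and $G_{n+1}=\mathsf{M}(\mathsf{P}_n(G_n))$. Then for every $n\ge 0$, $0\le G_n$.
   Context: Games over a poset $A$ of atoms are defined inductively: for each $a\in A$, $[a]$ is a game (atomic; often written simply $a$); whenever $L,R$ are non-empty sets of games, $\{L\mid R\}$ is a game (composite), with left options the elements of $L$ and right options the elements of $R$; $\{G_1,\dots,G_n\mid H_1,\dots,H_m\}$ denotes $\{\{G_1,\dots,G_n\}\mid\{H_1,\dots,H_m\}\}$. Relations $\le$ and $\lhd$ on games are defined by mutual recursion: $G\le H$ iff (1) every left option $G^L$ of $G$ satisfies $G^L\lhd H$, (2) every right option $H^R$ of $H$ satisfies $G\lhd H^R$, and (3) if $G$ or $H$ is atomic then $G\lhd H$. $G\lhd H$ iff (1) some right option $G^R$ of $G$ satisfies $G^R\le H$, or (2) some left option $H^L$ of $H$ satisfies $G\le H^L$, or (3) $G=[a]$, $H=[b]$ are atomic with $a\le b$ in $A$. *)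

theory Defs
  imports "HOL-Library.FSet"
begin

text \<open>Games over a poset of atoms 'a. Option sets are finite (fset); every game
  occurring in the statement is finite.\<close>

datatype 'a game = Atom 'a | Comp "'a game fset" "'a game fset"

fun lefts :: "'a game \<Rightarrow> 'a game fset" where
  "lefts (Atom a) = {||}"
| "lefts (Comp L R) = L"

fun rights :: "'a game \<Rightarrow> 'a game fset" where
  "rights (Atom a) = {||}"
| "rights (Comp L R) = R"

fun is_atom :: "'a game \<Rightarrow> bool" where
  "is_atom (Atom a) = True"
| "is_atom (Comp L R) = False"

text \<open>The mutually recursive relations \<le> and \<lhd>. Since games are well-founded,
  the inductive (least) solution is the unique solution of the defining clauses.\<close>

inductive game_le :: "'a::order game \<Rightarrow> 'a game \<Rightarrow> bool"
  and game_lf :: "'a::order game \<Rightarrow> 'a game \<Rightarrow> bool" where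
  le_intro: "\<lbrakk>\<forall>x. x |\<in>| lefts G \<longrightarrow> game_lf x H;
             \<forall>y. y |\<in>| rights H \<longrightarrow> game_lf G y;
             (is_atom G \<or> is_atom H) \<longrightarrow> game_lf G H\<rbrakk> \<Longrightarrow> game_le G H"
| lf_right: "\<lbrakk>y |\<in>| rights G; game_le y H\<rbrakk> \<Longrightarrow> game_lf G H"
| lf_left: "\<lbrakk>x |\<in>| lefts H; game_le G x\<rbrakk> \<Longrightarrow> game_lf G H"
| lf_atom: "a \<le> b \<Longrightarrow> game_lf (Atom a) (Atom b)"

text \<open>Atoms of L_5 = {-3,-2,-1,0,1} are represented as integers with the natural order.\<close>

definition star_game :: "int game" where
  "star_game = Comp {|Atom (-1)|} {|Atom (-3)|}"

definition M_game :: "int game \<Rightarrow> int game" where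
  "M_game G = Comp {|Atom 1|} {|G|}"

definition P_game :: "int game \<Rightarrow> int game" where
  "P_game G = Comp {|G|} {|Atom (-2)|}"

definition Pstar_game :: "int game \<Rightarrow> int game" where
  "Pstar_game G = Comp {|G|} {|star_game|}"

definition Pn_game :: "nat \<Rightarrow> int game \<Rightarrow> int game" where
  "Pn_game n G = (if odd n then P_game G else Pstar_game G)"

fun G_seq :: "nat \<Rightarrow> int game" where
  "G_seq 0 = Atom 0"
| "G_seq (Suc n) = M_game (Pn_game n (G_seq n))"

end

theory Submission
  imports Defs
begin

text \<open>Since \<open>0 \<le> 1\<close>, the atom \<open>0\<close> satisfies
  \<open>0 \<lhd> M(H)\<close>, so \<open>0 \<le> M(H)\<close> reduces to \<open>0 \<lhd> H\<close>; and \<open>0 \<lhd> P\<^sub>n(G)\<close> holds as soon as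
  \<open>0 \<le> G\<close>, because \<open>G\<close> is the left option of \<open>P\<^sub>n(G)\<close>.\<close>

lemma Atom_le_Atom: "a \<le> b \<Longrightarrow> game_le (Atom a) (Atom b)"
  by (rule le_intro) (auto intro: lf_atom)

lemma Atom_le_CompI:
  assumes "x |\<in>| L" and "game_le (Atom a) x"
    and "\<And>y. y |\<in>| R \<Longrightarrow> game_lf (Atom a) y"
  shows "game_le (Atom a) (Comp L R)"
proof -
  have "game_lf (Atom a) (Comp L R)"
    using assms(1,2) by (intro lf_left[of x]) simp_all
  then show ?thesis
    using assms(3) by (auto intro: le_intro)
qed

lemma lefts_Pn_game: "lefts (Pn_game n G) = {|G|}"
  by (simp add: Pn_game_def P_game_def Pstar_game_def)

lemma lf_Pn_game_if_le: "game_le H G \<Longrightarrow> game_lf H (Pn_game n G)"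
  by (rule lf_left[of G]) (simp_all add: lefts_Pn_game)

lemma zero_le_M_game: "game_lf (Atom 0) H \<Longrightarrow> game_le (Atom 0) (M_game H)"
  unfolding M_game_def by (rule Atom_le_CompI[of "Atom 1"]) (auto intro: Atom_le_Atom)

theorem corollary3p3:
  shows "\<forall>n. game_le (Atom 0) (G_seq n)"
proof
  fix n
  show "game_le (Atom 0) (G_seq n)"
  proof (induction n)
    case 0
    show ?case by (simp add: Atom_le_Atom)
  next
    case (Suc n)
    then show ?case by (simp add: zero_le_M_game lf_Pn_game_if_le)
  qed
qed

end
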